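(* Let $\mathcal{P}$ be a nondegenerate partial geometry $pg(s,t,t+1)$ with $s\ge 2t+1$. If the point graph of $\mathcal{P}$ is $3$-e.c., then $$s^2-(t^3+2t^2+2t)s+2t^4+4t^3+t^2-t\le 0.$$
   Context: A partial geometry $pg(s,t,\alpha)$ is an incidence structure of points and lines such that any two distinct points lie on at most one common line, every line contains exactly $s+1$ points, every point lies on exactly $t+1$ lines, and for every point $p$ and line $L$ with $p$ not on $L$ there are exactly $\alpha$ lines through $p$ meeting $L$. It is nondegenerate if $s\ge2$, $t\ge1$, $\alpha\ge1$. (A $pg(s,t,t+1)$ is the dual of a $2$-$(v,t+1,1)$ design.) The point graph has the points as vertices, two distinct points adjacent iff collinear. A graph with vertex set $V$ is $n$-e.c. if for every pair of disjoint subsets $A,B\subseteq V$ with $|A\cup B|=n$ (either may be empty) there is a vertex $z\notin A\cup B$ adjacent to every vertex of $A$ and to no vertex of $B$. *)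

theory Defs
  imports Main
begin

definition partial_geometry ::
  "'a set \<Rightarrow> 'b set \<Rightarrow> ('a \<Rightarrow> 'b \<Rightarrow> bool) \<Rightarrow> nat \<Rightarrow> nat \<Rightarrow> nat \<Rightarrow> bool" where
  "partial_geometry P L I s t \<alpha> \<longleftrightarrow>
     P \<noteq> {} \<and>
     (\<forall>p\<in>P. \<forall>q\<in>P. p \<noteq> q \<longrightarrow> card {l\<in>L. I p l \<and> I q l} \<le> 1) \<and>
     (\<forall>l\<in>L. card {p\<in>P. I p l} = s + 1) \<and>
     (\<forall>p\<in>P. card {l\<in>L. I p l} = t + 1) \<and>
     (\<forall>p\<in>P. \<forall>l\<in>L. \<not> I p l \<longrightarrow>
        card {m\<in>L. I p m \<and> (\<exists>q\<in>P. I q m \<and> I q l)} = \<alpha>)"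

definition nondegenerate_pg ::
  "'a set \<Rightarrow> 'b set \<Rightarrow> ('a \<Rightarrow> 'b \<Rightarrow> bool) \<Rightarrow> nat \<Rightarrow> nat \<Rightarrow> nat \<Rightarrow> bool" where
  "nondegenerate_pg P L I s t \<alpha> \<longleftrightarrow>
     partial_geometry P L I s t \<alpha> \<and> s \<ge> 2 \<and> t \<ge> 1 \<and> \<alpha> \<ge> 1"

definition point_graph_adj ::
  "'a set \<Rightarrow> 'b set \<Rightarrow> ('a \<Rightarrow> 'b \<Rightarrow> bool) \<Rightarrow> 'a \<Rightarrow> 'a \<Rightarrow> bool" where
  "point_graph_adj P L I p q \<longleftrightarrow> p \<in> P \<and> q \<in> P \<and> p \<noteq> q \<and> (\<exists>l\<in>L. I p l \<and> I q l)"

definition n_ec :: "nat \<Rightarrow> 'a set \<Rightarrow> ('a \<Rightarrow> 'a \<Rightarrow> bool) \<Rightarrow> bool" where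
  "n_ec n V adj \<longleftrightarrow>
     (\<forall>A B. A \<subseteq> V \<longrightarrow> B \<subseteq> V \<longrightarrow> A \<inter> B = {} \<longrightarrow> finite (A \<union> B) \<longrightarrow> card (A \<union> B) = n \<longrightarrow>
        (\<exists>z\<in>V - (A \<union> B). (\<forall>a\<in>A. adj z a) \<and> (\<forall>b\<in>B. \<not> adj z b)))"

end

theory Submission
  imports Defs
begin

(* Let G be a pg(s,t,t+1), i.e. the dual of a 2-(v,t+1,1) design.  Any two lines
   meet, so G is finite with |L| = 1 + (s+1)t and |P|(t+1) = |L|(s+1); a point off
   a line l is collinear with exactly t+1 points of l.

   If the point graph is 3-e.c., it has two non-collinear points x, y.  They have
   exactly (t+1)^2 common neighbours C, and the set F of points equal to neither and
   adjacent to neither has at least |P| - 2 - 2(t+1)s + (t+1)^2 elements.  On the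
   other hand, applying 3-e.c. to {x,y,z} shows that every z in F is collinear with
   some w in C, so F is covered by the lines through C avoiding x and y.  Such a
   line m carries s-2t-1 + |C \<inter> m| <= |C \<inter> m|(s-2t) points of F, and each w in C
   lies on at most t-1 of these lines, whence |F| <= (t+1)^2 (t-1)(s-2t).
   Comparing both bounds and eliminating |P| yields the quadratic inequality in s. *)

lemma double_count:
  assumes "finite A" "finite B"
  shows "(\<Sum>a\<in>A. card {b\<in>B. R a b}) = (\<Sum>b\<in>B. card {a\<in>A. R a b})"
proof -
  have "(\<Sum>a\<in>A. card {b\<in>B. R a b}) = (\<Sum>a\<in>A. \<Sum>b\<in>B. if R a b then 1 else 0)"
    using assms by (simp add: sum.If_cases Collect_conj_eq)
  also have "\<dots> = (\<Sum>b\<in>B. \<Sum>a\<in>A. if R a b then 1 else 0)" by (rule sum.swap)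
  also have "\<dots> = (\<Sum>b\<in>B. card {a\<in>A. R a b})"
    using assms by (simp add: sum.If_cases Collect_conj_eq)
  finally show ?thesis .
qed

text \<open>A 3-e.c. graph on at least three vertices has two distinct non-adjacent vertices:
  some vertex is adjacent to none of three given ones.\<close>
lemma ec3_nonadjacent_pair:
  assumes ec: "n_ec 3 V adj" and V: "finite V" "card V \<ge> 3"
  shows "\<exists>x\<in>V. \<exists>y\<in>V. x \<noteq> y \<and> \<not> adj y x"
proof -
  obtain B where B: "B \<subseteq> V" "card B = 3" "finite B"
    using V obtain_subset_with_card_n by metis
  then obtain y where y: "y \<in> V - B" "\<forall>b\<in>B. \<not> adj y b"
    using ec[unfolded n_ec_def, rule_format, of "{}" B] by auto
  obtain x where "x \<in> B" using B(2) by fastforce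
  then show ?thesis using y B(1) by (metis DiffE subsetD)
qed

lemma ec3_common_neighbour:
  assumes ec: "n_ec 3 V adj" and "x\<in>V" "y\<in>V" "z\<in>V" "x\<noteq>y" "x\<noteq>z" "y\<noteq>z"
  shows "\<exists>w\<in>V. adj w x \<and> adj w y \<and> adj w z"
  using ec[unfolded n_ec_def, rule_format, of "{x,y,z}" "{}"] assms by auto

locale dual_design_pg =
  fixes P :: "'a set" and L :: "'b set" and I :: "'a \<Rightarrow> 'b \<Rightarrow> bool" and s t :: nat
  assumes pg: "partial_geometry P L I s t (t+1)"
begin

definition pts :: "'b \<Rightarrow> 'a set" where "pts l = {p\<in>P. I p l}"
definition lns :: "'a \<Rightarrow> 'b set" where "lns p = {l\<in>L. I p l}"

abbreviation adj :: "'a \<Rightarrow> 'a \<Rightarrow> bool" where "adj \<equiv> point_graph_adj P L I"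

definition nbhd :: "'a \<Rightarrow> 'a set" where "nbhd p = {q\<in>P. adj p q}"

lemma adj_iff: "adj p q \<longleftrightarrow> p\<in>P \<and> q\<in>P \<and> p\<noteq>q \<and> (\<exists>l\<in>L. I p l \<and> I q l)"
  unfolding point_graph_adj_def by simp

lemma adj_sym: "adj p q \<Longrightarrow> adj q p"
  unfolding adj_iff by blast

lemma P_nonempty: "P \<noteq> {}"
  using pg unfolding partial_geometry_def by blast

lemma pts_card: "l\<in>L \<Longrightarrow> card (pts l) = s+1"
  using pg unfolding partial_geometry_def pts_def by blast

lemma lns_card: "p\<in>P \<Longrightarrow> card (lns p) = t+1"
  using pg unfolding partial_geometry_def lns_def by blast

lemma pts_finite: "l\<in>L \<Longrightarrow> finite (pts l)"
  using pts_card card.infinite by fastforce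

lemma lns_finite: "p\<in>P \<Longrightarrow> finite (lns p)"
  using lns_card card.infinite by fastforce

lemma point_on_some_line: "p\<in>P \<Longrightarrow> \<exists>l\<in>L. I p l"
  using lns_card[of p] unfolding lns_def
  by (metis (no_types, lifting) Collect_empty_eq card.empty add_is_0 one_neq_zero)

lemma line_has_point: "l\<in>L \<Longrightarrow> \<exists>p\<in>P. I p l"
  using pts_card[of l] unfolding pts_def
  by (metis (no_types, lifting) Collect_empty_eq card.empty add_is_0 one_neq_zero)

lemma unique_line:
  assumes "p\<in>P" "q\<in>P" "p\<noteq>q" "l\<in>L" "m\<in>L" "I p l" "I q l" "I p m" "I q m"
  shows "l = m"
proof -
  have fin: "finite {l\<in>L. I p l \<and> I q l}"
    using lns_finite[OF assms(1)] unfolding lns_def by (rule rev_finite_subset) auto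
  have "card {l\<in>L. I p l \<and> I q l} \<le> 1"
    using pg assms(1-3) unfolding partial_geometry_def by blast
  with fin show ?thesis using card_le_Suc0_iff_eq[OF fin] assms by auto
qed

text \<open>Since \<open>\<alpha> = t+1\<close>, every line through a point p off l meets l.\<close>
lemma line_meets_line:
  assumes "p\<in>P" "l\<in>L" "\<not> I p l" "m\<in>L" "I p m"
  shows "\<exists>q\<in>P. I q m \<and> I q l"
proof -
  let ?S = "{m\<in>L. I p m \<and> (\<exists>q\<in>P. I q m \<and> I q l)}"
  have "card ?S = t+1" using pg assms unfolding partial_geometry_def by blast
  then have "?S = lns p"
    using lns_finite[OF assms(1)] lns_card[OF assms(1)]
    by (intro card_subset_eq) (auto simp: lns_def)
  then show ?thesis using assms unfolding lns_def by auto
qed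

lemma any_two_lines_meet:
  assumes "l\<in>L" "m\<in>L"
  shows "\<exists>q\<in>P. I q l \<and> I q m"
  using line_has_point[OF assms(2)] line_meets_line[OF _ assms(1) _ assms(2)] by blast

text \<open>Finiteness is not assumed: every line meets a fixed line l0, so L is covered by
  the finitely many lines through the s+1 points of l0.\<close>
lemma L_finite: "finite L"
proof -
  obtain p0 l0 where l0: "p0\<in>P" "l0\<in>L" "I p0 l0"
    using P_nonempty point_on_some_line by blast
  have "L \<subseteq> (\<Union>q\<in>pts l0. lns q)"
    using any_two_lines_meet[OF l0(2)] unfolding pts_def lns_def by blast
  moreover have "finite (\<Union>q\<in>pts l0. lns q)"
    using pts_finite[OF l0(2)] lns_finite unfolding pts_def by auto
  ultimately show ?thesis by (rule finite_subset)
qed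

lemma P_finite: "finite P"
proof -
  have "P \<subseteq> (\<Union>l\<in>L. pts l)" using point_on_some_line unfolding pts_def by blast
  moreover have "finite (\<Union>l\<in>L. pts l)" using L_finite pts_finite by auto
  ultimately show ?thesis by (rule finite_subset)
qed

lemma card_P_ge_3:
  assumes "s \<ge> 2"
  shows "card P \<ge> 3"
proof -
  obtain l where l: "l \<in> L" using P_nonempty point_on_some_line by blast
  have "card (pts l) \<le> card P"
    by (rule card_mono[OF P_finite]) (auto simp: pts_def)
  then show ?thesis using pts_card[OF l] assms by simp
qed

lemma flag_count: "card P * (t+1) = card L * (s+1)"
proof -
  have "(\<Sum>p\<in>P. card {l\<in>L. I p l}) = (\<Sum>l\<in>L. card {p\<in>P. I p l})"
    by (rule double_count[OF P_finite L_finite])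
  then show ?thesis using lns_card pts_card unfolding lns_def pts_def by simp
qed

text \<open>Every line other than a fixed line \<open>l0\<close> meets \<open>l0\<close> in exactly one point.\<close>
lemma L_card: "card L = 1 + (s+1)*t"
proof -
  obtain p0 l0 where l0: "p0\<in>P" "l0\<in>L" "I p0 l0"
    using P_nonempty point_on_some_line by blast
  have partition: "L - {l0} = (\<Union>q\<in>pts l0. lns q - {l0})"
    using any_two_lines_meet[OF l0(2)] unfolding pts_def lns_def by blast
  have "card (\<Union>q\<in>pts l0. lns q - {l0}) = (\<Sum>q\<in>pts l0. card (lns q - {l0}))"
  proof (rule card_UN_disjoint)
    show "finite (pts l0)" using pts_finite[OF l0(2)] .
    show "\<forall>q\<in>pts l0. finite (lns q - {l0})" using lns_finite unfolding pts_def by auto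
    show "\<forall>q\<in>pts l0. \<forall>q'\<in>pts l0. q \<noteq> q' \<longrightarrow> (lns q - {l0}) \<inter> (lns q' - {l0}) = {}"
      using unique_line l0(2) unfolding pts_def lns_def by blast
  qed
  also have "\<dots> = (\<Sum>q\<in>pts l0. t)"
    using l0(2) lns_card lns_finite by (intro sum.cong) (auto simp: pts_def lns_def)
  also have "\<dots> = (s+1)*t" using pts_card[OF l0(2)] by simp
  finally have "card (L - {l0}) = (s+1)*t" using partition by simp
  moreover have "card L > 0" using l0(2) L_finite by (auto simp: card_gt_0_iff)
  ultimately show ?thesis using l0(2) L_finite by (simp add: card_Diff_singleton_if)
qed

text \<open>A point p off a line l is collinear with exactly t+1 points of l: the t+1 lines
  through p each meet l, in distinct points.\<close>
lemma points_seen_on_line: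
  assumes p: "p\<in>P" and l: "l\<in>L" and npl: "\<not> I p l"
  shows "card {q\<in>pts l. adj p q} = t+1"
proof -
  define meet where "meet m = (SOME q. q\<in>P \<and> I q m \<and> I q l)" for m
  have meet: "meet m \<in> P \<and> I (meet m) m \<and> I (meet m) l" if "m \<in> lns p" for m
    unfolding meet_def
    by (rule someI_ex) (use line_meets_line[OF p l npl] that in \<open>auto simp: lns_def\<close>)
  have meet_ne: "meet m \<noteq> p" if "m \<in> lns p" for m
    using meet[OF that] npl by auto
  have "bij_betw meet (lns p) {q\<in>pts l. adj p q}"
  proof (rule bij_betw_imageI)
    show "inj_on meet (lns p)"
    proof (rule inj_onI)
      fix m m' assume "m \<in> lns p" "m' \<in> lns p" "meet m = meet m'"
      then have "meet m \<in> P" "meet m \<noteq> p" "I (meet m) m" "I (meet m) m'"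
        using meet[of m] meet[of m'] meet_ne[of m] by auto
      then show "m = m'"
        using unique_line[OF p, of "meet m" m m'] \<open>m \<in> lns p\<close> \<open>m' \<in> lns p\<close>
        by (auto simp: lns_def)
    qed
    show "meet ` lns p = {q\<in>pts l. adj p q}"
    proof
      show "meet ` lns p \<subseteq> {q\<in>pts l. adj p q}"
        using meet meet_ne p by (auto simp: lns_def pts_def adj_iff)
      show "{q\<in>pts l. adj p q} \<subseteq> meet ` lns p"
      proof
        fix q assume q: "q \<in> {q\<in>pts l. adj p q}"
        then obtain m where m: "m\<in>L" "I p m" "I q m" and qP: "q\<in>P" "I q l" "q \<noteq> p"
          by (auto simp: adj_iff pts_def)
        then have "m \<in> lns p" by (simp add: lns_def)
        moreover have "meet m = q"
        proof (rule ccontr)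
          assume "meet m \<noteq> q"
          then have "m = l"
            using unique_line[of "meet m" q m l] meet[OF \<open>m \<in> lns p\<close>] m qP l by auto
          then show False using m npl by simp
        qed
        ultimately show "q \<in> meet ` lns p" by blast
      qed
    qed
  qed
  then show ?thesis using bij_betw_same_card lns_card[OF p] by fastforce
qed

lemma nbhd_subset: "nbhd p \<subseteq> P"
  unfolding nbhd_def by auto

lemma nbhd_finite: "finite (nbhd p)"
  using nbhd_subset P_finite by (rule finite_subset)

text \<open>A point has at most (t+1)s neighbours: the t+1 lines through it carry s further
  points each.\<close>
lemma nbhd_card:
  assumes p: "p\<in>P"
  shows "card (nbhd p) \<le> (t+1)*s"
proof -
  have "nbhd p \<subseteq> (\<Union>l\<in>lns p. pts l - {p})"
    unfolding nbhd_def adj_iff lns_def pts_def by blast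
  then have "card (nbhd p) \<le> card (\<Union>l\<in>lns p. pts l - {p})"
    using lns_finite[OF p] pts_finite by (intro card_mono) (auto simp: lns_def)
  also have "\<dots> \<le> (\<Sum>l\<in>lns p. card (pts l - {p}))" by (rule card_UN_le[OF lns_finite[OF p]])
  also have "\<dots> = (\<Sum>l\<in>lns p. s)"
    using p pts_card pts_finite by (intro sum.cong) (auto simp: lns_def pts_def)
  also have "\<dots> = (t+1)*s" using lns_card[OF p] by simp
  finally show ?thesis .
qed

text \<open>Two non-collinear points have exactly (t+1)^2 common neighbours: each of the
  t+1 lines through x carries t+1 neighbours of y.\<close>
lemma common_nbhd_card:
  assumes x: "x\<in>P" and y: "y\<in>P" and xy: "x \<noteq> y" and nadj: "\<not> adj x y"
  shows "card (nbhd x \<inter> nbhd y) = (t+1)^2"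
proof -
  have y_off: "\<not> I y l" if "l\<in>L" "I x l" for l
    using xy nadj x y that adj_iff by blast
  have "x \<notin> nbhd y" using nadj adj_sym unfolding nbhd_def by blast
  have partition: "nbhd x \<inter> nbhd y = (\<Union>l\<in>lns x. {q\<in>pts l. adj y q})"
  proof
    show "nbhd x \<inter> nbhd y \<subseteq> (\<Union>l\<in>lns x. {q\<in>pts l. adj y q})"
      unfolding nbhd_def adj_iff lns_def pts_def by blast
    show "(\<Union>l\<in>lns x. {q\<in>pts l. adj y q}) \<subseteq> nbhd x \<inter> nbhd y"
      using \<open>x \<notin> nbhd y\<close> x y unfolding nbhd_def lns_def pts_def adj_iff by blast
  qed
  have "card (\<Union>l\<in>lns x. {q\<in>pts l. adj y q}) = (\<Sum>l\<in>lns x. card {q\<in>pts l. adj y q})"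
  proof (rule card_UN_disjoint)
    show "finite (lns x)" using lns_finite[OF x] .
    show "\<forall>l\<in>lns x. finite {q\<in>pts l. adj y q}" using pts_finite by (auto simp: lns_def)
    show "\<forall>l\<in>lns x. \<forall>m\<in>lns x. l \<noteq> m \<longrightarrow> {q\<in>pts l. adj y q} \<inter> {q\<in>pts m. adj y q} = {}"
      using unique_line[OF x] \<open>x \<notin> nbhd y\<close> by (auto simp: lns_def pts_def nbhd_def)
  qed
  also have "\<dots> = (\<Sum>l\<in>lns x. t+1)"
    using points_seen_on_line[OF y] y_off by (intro sum.cong) (auto simp: lns_def)
  also have "\<dots> = (t+1)^2" using lns_card[OF x] by (simp add: power2_eq_square)
  finally show ?thesis using partition by simp
qed

definition far :: "'a \<Rightarrow> 'a \<Rightarrow> 'a set" where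
  "far x y = P - ({x,y} \<union> nbhd x \<union> nbhd y)"

lemma far_card_lower:
  assumes x: "x\<in>P" and y: "y\<in>P" and xy: "x \<noteq> y" and nadj: "\<not> adj x y"
  shows "card P + (t+1)^2 \<le> card (far x y) + 2 + 2*((t+1)*s)"
proof -
  have "x \<notin> nbhd x \<union> nbhd y" "y \<notin> nbhd x \<union> nbhd y"
    using nadj adj_sym unfolding nbhd_def adj_iff by blast+
  then have near: "card ({x,y} \<union> (nbhd x \<union> nbhd y)) = 2 + card (nbhd x \<union> nbhd y)"
    using nbhd_finite xy by simp
  have "card (nbhd x) + card (nbhd y) = card (nbhd x \<union> nbhd y) + card (nbhd x \<inter> nbhd y)"
    by (rule card_Un_Int[OF nbhd_finite nbhd_finite])
  moreover have "card P = card (far x y) + card ({x,y} \<union> (nbhd x \<union> nbhd y))"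
  proof -
    have sub: "{x,y} \<union> (nbhd x \<union> nbhd y) \<subseteq> P" using x y nbhd_subset by blast
    then have "card (far x y) = card P - card ({x,y} \<union> (nbhd x \<union> nbhd y))"
      unfolding far_def by (simp add: card_Diff_subset nbhd_finite Un_assoc)
    moreover have "card ({x,y} \<union> (nbhd x \<union> nbhd y)) \<le> card P"
      using sub by (rule card_mono[OF P_finite])
    ultimately show ?thesis by simp
  qed
  ultimately show ?thesis
    using near common_nbhd_card[OF x y xy nadj] nbhd_card[OF x] nbhd_card[OF y] by linarith
qed

text \<open>A line m avoiding x and y contains s-2t-1 + |C \<inter> m| far points, where C is the
  common neighbourhood: m carries t+1 neighbours of each of x and y.\<close>
lemma far_points_on_line:
  assumes x: "x\<in>P" and y: "y\<in>P" and m: "m\<in>L" "\<not> I x m" "\<not> I y m"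
  shows "card (pts m \<inter> far x y) + 2*(t+1) = s + 1 + card (nbhd x \<inter> nbhd y \<inter> pts m)"
proof -
  have fin: "finite (pts m)" using pts_finite[OF m(1)] .
  have seen: "card (pts m \<inter> nbhd p) = t+1" if "p\<in>P" "\<not> I p m" for p
  proof -
    have "pts m \<inter> nbhd p = {q\<in>pts m. adj p q}" by (auto simp: nbhd_def pts_def)
    then show ?thesis using points_seen_on_line[OF that(1) m(1) that(2)] by simp
  qed
  have union: "pts m \<inter> nbhd x \<union> pts m \<inter> nbhd y = pts m \<inter> (nbhd x \<union> nbhd y)"
    and inter: "pts m \<inter> nbhd x \<inter> (pts m \<inter> nbhd y) = nbhd x \<inter> nbhd y \<inter> pts m"
    by blast+
  have "card (pts m \<inter> nbhd x) + card (pts m \<inter> nbhd y)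
      = card (pts m \<inter> (nbhd x \<union> nbhd y)) + card (nbhd x \<inter> nbhd y \<inter> pts m)"
    using card_Un_Int[of "pts m \<inter> nbhd x" "pts m \<inter> nbhd y"] fin
    unfolding union inter by simp
  moreover have "card (pts m \<inter> far x y) + card (pts m \<inter> (nbhd x \<union> nbhd y)) = s+1"
  proof -
    have "x \<notin> pts m" "y \<notin> pts m" using m unfolding pts_def by auto
    then have "pts m \<inter> far x y = pts m - pts m \<inter> (nbhd x \<union> nbhd y)"
      unfolding far_def pts_def by blast
    then have "card (pts m \<inter> far x y) = card (pts m) - card (pts m \<inter> (nbhd x \<union> nbhd y))"
      using fin by (simp add: card_Diff_subset)
    moreover have "card (pts m \<inter> (nbhd x \<union> nbhd y)) \<le> card (pts m)"
      using fin by (simp add: card_mono)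
    ultimately show ?thesis using pts_card[OF m(1)] by simp
  qed
  ultimately show ?thesis using seen[OF x m(2)] seen[OF y m(3)] by arith
qed

text \<open>A common neighbour w of non-collinear x and y lies on at most t-1 lines
  avoiding both: the line wx and the line wy are distinct.\<close>
lemma lines_avoiding_card:
  assumes xy: "x \<noteq> y" and nadj: "\<not> adj x y" and w: "w \<in> nbhd x \<inter> nbhd y"
  shows "card {m\<in>L. I w m \<and> \<not> I x m \<and> \<not> I y m} \<le> t - 1"
proof -
  have wP: "w\<in>P" using w nbhd_subset by auto
  obtain lx ly where lx: "lx\<in>L" "I x lx" "I w lx" and ly: "ly\<in>L" "I y ly" "I w ly"
    using w unfolding nbhd_def adj_iff by blast
  have "lx \<noteq> ly" using xy nadj lx ly w unfolding nbhd_def adj_iff by auto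
  then have "card (lns w - {lx, ly}) = t - 1"
    using lx ly lns_finite[OF wP] lns_card[OF wP] by (simp add: lns_def card_Diff_subset)
  moreover have "{m\<in>L. I w m \<and> \<not> I x m \<and> \<not> I y m} \<subseteq> lns w - {lx, ly}"
    using lx ly unfolding lns_def by auto
  ultimately show ?thesis using lns_finite[OF wP] by (metis card_mono finite_Diff)
qed

text \<open>If the point graph is 3-e.c., every far point z is adjacent to a common
  neighbour of x and y, namely a common neighbour of x, y and z.\<close>
lemma ec3_far_points_covered:
  assumes ec: "n_ec 3 P adj" and x: "x\<in>P" and y: "y\<in>P" and xy: "x \<noteq> y"
    and z: "z \<in> far x y"
  shows "\<exists>w\<in>nbhd x \<inter> nbhd y. adj w z"
proof -
  have "z \<in> P" "x \<noteq> z" "y \<noteq> z" using z unfolding far_def by auto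
  then obtain w where "w \<in> P" "adj w x" "adj w y" "adj w z"
    using ec3_common_neighbour[OF ec x y _ xy] by blast
  then show ?thesis using adj_sym unfolding nbhd_def by blast
qed

text \<open>The far points are covered by the
  lines M through common neighbours avoiding x and y; double counting the incidences
  between M and the common neighbourhood bounds the total.\<close>
lemma far_card_upper:
  assumes x: "x\<in>P" and y: "y\<in>P" and xy: "x \<noteq> y" and nadj: "\<not> adj x y" and s_ge: "s \<ge> 2*t+1"
    and covered: "\<And>z. z \<in> far x y \<Longrightarrow> \<exists>w\<in>nbhd x \<inter> nbhd y. adj w z"
  shows "card (far x y) \<le> (t+1)^2 * (t-1) * (s - 2*t)"
proof -
  define C where "C = nbhd x \<inter> nbhd y"
  define M where "M = {m\<in>L. \<not> I x m \<and> \<not> I y m \<and> (\<exists>w\<in>C. I w m)}"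
  define c where "c m = card (C \<inter> pts m)" for m
  have finC: "finite C" unfolding C_def using nbhd_finite by auto
  have finM: "finite M" unfolding M_def using L_finite by auto
  have cover: "far x y \<subseteq> (\<Union>m\<in>M. pts m \<inter> far x y)"
  proof
    fix z assume z: "z \<in> far x y"
    obtain w m where w: "w\<in>C" and m: "m\<in>L" "I w m" "I z m"
      using covered[OF z] unfolding C_def adj_iff by blast
    have zP: "z\<in>P" and "\<not> adj x z" "\<not> adj y z" "z \<noteq> x" "z \<noteq> y"
      using z unfolding far_def nbhd_def by auto
    then have "\<not> I x m" "\<not> I y m" using m(1,3) x y unfolding adj_iff by blast+
    then have "m \<in> M" using m w unfolding M_def by blast
    then show "z \<in> (\<Union>m\<in>M. pts m \<inter> far x y)" using z zP m(3) unfolding pts_def by blast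
  qed
  have on_line: "card (pts m \<inter> far x y) \<le> c m * (s - 2*t)" if m: "m\<in>M" for m
  proof -
    obtain w where "w \<in> C" "I w m" using m unfolding M_def by blast
    then have "w \<in> C \<inter> pts m" using nbhd_subset unfolding C_def pts_def by auto
    then have "C \<inter> pts m \<noteq> {}" by blast
    then have c_pos: "c m \<ge> 1" using finC unfolding c_def by (simp add: Suc_le_eq card_gt_0_iff)
    have "card (pts m \<inter> far x y) + 2*(t+1) = s + 1 + c m"
      using far_points_on_line[OF x y] m unfolding M_def c_def C_def by auto
    then have "card (pts m \<inter> far x y) = (s - 2*t - 1) + c m" using s_ge by arith
    also have "\<dots> \<le> c m * (s - 2*t - 1) + c m" using c_pos by simp
    also have "\<dots> = c m * (s - 2*t)"
    proof -
      have "s - 2*t = Suc (s - 2*t - 1)" using s_ge by arith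
      then show ?thesis by (metis mult_Suc_right add.commute)
    qed
    finally show ?thesis .
  qed
  have incidences: "(\<Sum>m\<in>M. c m) = (\<Sum>w\<in>C. card {m\<in>M. I w m})"
  proof -
    have "(\<Sum>m\<in>M. c m) = (\<Sum>m\<in>M. card {w\<in>C. I w m})"
      unfolding c_def pts_def C_def nbhd_def by (intro sum.cong) (auto intro!: arg_cong[where f=card])
    also have "\<dots> = (\<Sum>w\<in>C. card {m\<in>M. I w m})" by (rule double_count[OF finM finC])
    finally show ?thesis .
  qed
  have "card (far x y) \<le> card (\<Union>m\<in>M. pts m \<inter> far x y)"
    using cover finM pts_finite unfolding M_def by (intro card_mono) auto
  also have "\<dots> \<le> (\<Sum>m\<in>M. card (pts m \<inter> far x y))" by (rule card_UN_le[OF finM])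
  also have "\<dots> \<le> (\<Sum>m\<in>M. c m) * (s - 2*t)"
    unfolding sum_distrib_right by (rule sum_mono) (rule on_line)
  also have "\<dots> \<le> (t+1)^2 * (t-1) * (s - 2*t)"
  proof -
    have "card {m\<in>M. I w m} \<le> t - 1" if w: "w \<in> C" for w
    proof -
      have "{m\<in>M. I w m} \<subseteq> {m\<in>L. I w m \<and> \<not> I x m \<and> \<not> I y m}"
        unfolding M_def by blast
      then have "card {m\<in>M. I w m} \<le> card {m\<in>L. I w m \<and> \<not> I x m \<and> \<not> I y m}"
        using L_finite by (intro card_mono) auto
      also have "\<dots> \<le> t - 1" using lines_avoiding_card[OF xy nadj] w unfolding C_def by blast
      finally show ?thesis .
    qed
    then have "(\<Sum>m\<in>M. c m) \<le> (\<Sum>w\<in>C. t - 1)"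
      unfolding incidences by (rule sum_mono)
    also have "\<dots> = (t+1)^2 * (t-1)"
      using common_nbhd_card[OF x y xy nadj] unfolding C_def by (simp only: sum_constant of_nat_id)
    finally show ?thesis by (rule mult_right_mono) simp
  qed
  finally show ?thesis .
qed

end

text \<open>Elimination of n = |P| from the two bounds on the number f of far points: with
  the flag count, t times the quadratic equals (t+1) times (lower - upper bound) <= 0.\<close>
lemma eliminate_point_count:
  fixes s t n f :: nat
  assumes t: "t \<ge> 1" and s: "s \<ge> 2*t"
    and flags: "n * (t+1) = (1 + (s+1)*t) * (s+1)"
    and lower: "n + (t+1)^2 \<le> f + 2 + 2*((t+1)*s)"
    and upper: "f \<le> (t+1)^2 * (t-1) * (s - 2*t)"
  shows "(int s)^2 - (int t^3 + 2 * int t^2 + 2 * int t) * int s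
           + 2 * int t^4 + 4 * int t^3 + int t^2 - int t \<le> 0"
proof -
  define S T N F where "S = int s" and "T = int t" and "N = int n" and "F = int f"
  have flags': "N * (T+1) = (1 + (S+1)*T) * (S+1)"
    using arg_cong[OF flags, of int] unfolding S_def T_def N_def by (simp add: algebra_simps)
  have "int (n + (t+1)^2) \<le> int (f + 2 + 2*((t+1)*s))" using lower by (simp only: of_nat_le_iff)
  then have lower': "N + (T+1)^2 \<le> F + 2 + 2*((T+1)*S)"
    unfolding S_def T_def N_def F_def
    by (simp only: of_nat_add of_nat_mult of_nat_power of_nat_1 of_nat_numeral)
  have "int f \<le> int ((t+1)^2 * (t-1) * (s - 2*t))" using upper by (simp only: of_nat_le_iff)
  then have upper': "F \<le> (T+1)^2 * (T-1) * (S - 2*T)"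
    using t s unfolding S_def T_def F_def
    by (simp only: of_nat_add of_nat_mult of_nat_power of_nat_1 of_nat_numeral of_nat_diff)
  let ?g = "N + (T+1)^2 - 2 - 2*((T+1)*S) - (T+1)^2 * (T-1) * (S - 2*T)"
  have "T * (S^2 - (T^3 + 2*T^2 + 2*T)*S + 2*T^4 + 4*T^3 + T^2 - T) = (T+1) * ?g"
    using flags' by (simp add: algebra_simps power2_eq_square power3_eq_cube power4_eq_xxxx)
  also have "\<dots> \<le> 0" using lower' upper' T_def by (intro mult_nonneg_nonpos) auto
  finally show ?thesis using t unfolding S_def T_def by (simp add: mult_le_0_iff)
qed

theorem mainTheorem12:
  fixes P :: "'a set" and L :: "'b set" and I :: "'a \<Rightarrow> 'b \<Rightarrow> bool" and s t :: nat
  assumes "nondegenerate_pg P L I s t (t + 1)"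
    and "s \<ge> 2 * t + 1"
    and "n_ec 3 P (point_graph_adj P L I)"
  shows "(int s)^2 - (int t^3 + 2 * int t^2 + 2 * int t) * int s
           + 2 * int t^4 + 4 * int t^3 + int t^2 - int t \<le> 0"
proof -
  interpret G: dual_design_pg P L I s t
    using assms(1) unfolding nondegenerate_pg_def by unfold_locales auto
  have s2: "s \<ge> 2" and t1: "t \<ge> 1" using assms(1) unfolding nondegenerate_pg_def by auto
  obtain x y where x: "x\<in>P" and y: "y\<in>P" and xy: "x \<noteq> y" and "\<not> G.adj y x"
    using ec3_nonadjacent_pair[OF assms(3) G.P_finite G.card_P_ge_3[OF s2]] by blast
  then have nadj: "\<not> G.adj x y" using G.adj_sym by blast
  have covered: "\<And>z. z \<in> G.far x y \<Longrightarrow> \<exists>w\<in>G.nbhd x \<inter> G.nbhd y. G.adj w z"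
    using G.ec3_far_points_covered[OF assms(3) x y xy] .
  have "card (G.far x y) \<le> (t+1)^2 * (t-1) * (s - 2*t)"
    using G.far_card_upper[OF x y xy nadj assms(2) covered] .
  moreover have "card P + (t+1)^2 \<le> card (G.far x y) + 2 + 2*((t+1)*s)"
    using G.far_card_lower[OF x y xy nadj] .
  moreover have "card P * (t+1) = (1 + (s+1)*t) * (s+1)"
    using G.flag_count G.L_card by simp
  moreover have "2*t \<le> s" using assms(2) by simp
  ultimately show ?thesis using eliminate_point_count t1 by blast
qed

end
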